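(* In the setting of the context, for every iteration $k\geq 0$, every batch size $m\in\{1,\dots,|\mathrm{OD}|\}$ and every step size $\gamma_k\in[0,1]$, the iterates of the batched SOFW method satisfy \[ \mathbb{E}\bigl[\Psi(\Theta x_{k+1})\,\big|\,x_k\bigr]\;\leq\;\Psi(\Theta x_k)-\frac{\gamma_k}{|\mathrm{OD}|}\,g(x_k)+\frac{\gamma_k^2}{2|\mathrm{OD}|}\,C^{\otimes}_\Psi, \] where $g(x)=\sum_{w\in\mathrm{OD}}g^{(w)}(x)$ and $g^{(w)}(x)=\max_{s\in\mathcal{X}^{(w)}}\langle\nabla\Psi(\Theta x),\,\Theta(x^{[w]}-s^{[w]})\rangle$ is the block Frank–Wolfe gap. In particular the right-hand side does not depend on $m$.
   Context: Let $\mathcal{G}=(\mathcal{V},\mathcal{E})$ be a finite directed graph. Let $\mathrm{OD}$ be a finite nonempty set of origin–destination pairs $w=(i,j)$ with $i,j\in\mathcal{V}$, each with a demand $d_w>0$. For each $w\in\mathrm{OD}$ let $\mathcal{P}_w$ be a finite nonempty set of directed paths from $i$ to $j$, and let $\mathcal{P}=\bigsqcup_w \mathcal{P}_w$. A path-flow vector $x\in\mathbb{R}^{|\mathcal{P}|}$ is written as a concatenation of blocks $x=(x^{(w)})_{w\in\mathrm{OD}}$ with $x^{(w)}\in\mathbb{R}^{|\mathcal{P}_w|}$. The feasible set is the product $\mathcal{X}=\prod_{w}\mathcal{X}^{(w)}$, where $\mathcal{X}^{(w)}=\{x^{(w)}\geq 0 : \sum_{p\in\mathcal{P}_w}x_p=d_w\}$.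 Let $\Theta\in\{0,1\}^{|\mathcal{E}|\times|\mathcal{P}|}$ be the edge–path incidence matrix ($\Theta_{e,p}=1$ iff edge $e$ lies on path $p$), so edge flows are $F(x)=\Theta x$. Let $\Psi:\mathbb{R}^{|\mathcal{E}|}\to\mathbb{R}$ be convex and continuously differentiable. Lifting notation: for $w\in\mathrm{OD}$ and $x\in\mathbb{R}^{|\mathcal{P}|}$, $x^{[w]}\in\mathbb{R}^{|\mathcal{P}|}$ denotes the vector that agrees with $x$ on the coordinates indexed by $\mathcal{P}_w$ and is zero elsewhere; similarly, for $s^{(w)}\in\mathcal{X}^{(w)}$, $s^{[w]}$ is its zero-padded lift to $\mathbb{R}^{|\mathcal{P}|}$. Block curvature constants: for $w\in\mathrm{OD}$, \[ C^{(w)}_\Psi := \sup\frac{2}{\gamma^2}\Bigl[\Psi(\Theta y)-\Psi(\Theta x)-\langle\nabla\Psi(\Theta x),\,\Theta(y-x)\rangle\Bigr], \] the supremum over $x\in\mathcal{X}$, $s^{(w)}\in\mathcal{X}^{(w)}$, $\gamma\in(0,1]$, with $y=x+\gamma(s^{[w]}-x^{[w]})$; these are assumed finite, and $C^{\otimes}_\Psi:=\sum_{w\in\mathrm{OD}}C^{(w)}_\Psi$. Batched SOFW method: given $x_k\in\mathcal{X}$, draw $\mathcal{I}_k\subset\mathrm{OD}$ uniformly at random among all subsets of size $m$, independently of the past. For each $w\in\mathcal{I}_k$ choose $s_k^{(w)}\in\arg\min_{s\in\mathcal{X}^{(w)}}\langle\nabla\Psi(\Theta x_k),\Theta s^{[w]}\rangle$.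 Set $d_k=\frac1m\sum_{w\in\mathcal{I}_k}(s_k^{[w]}-x_k^{[w]})$ and $x_{k+1}=x_k+\gamma_k d_k$. *)

theory Defs
  imports "HOL-Probability.Probability"
begin

text \<open>Setting: vertices of type 'v (a finite set V), edges indexed by a finite type 'e
  via an injective endpoint map into V x V (so the edge set is a set of ordered pairs),
  OD pairs are pairs of vertices, and paths are indexed by a finite type 'p whose
  elements are exactly the disjoint union of the pth sets P_w.  Block vectors s^(w) are represented by their
  zero-padded lifts s^[w].\<close>

definition is_dpath :: "('v \<times> 'v) set \<Rightarrow> 'v \<Rightarrow> 'v \<Rightarrow> 'v list \<Rightarrow> bool" where
  "is_dpath Ed i j vs \<longleftrightarrow> vs \<noteq> [] \<and> hd vs = i \<and> last vs = j \<and> distinct vs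
     \<and> set (zip vs (tl vs)) \<subseteq> Ed"

definition incidence :: "('e \<Rightarrow> 'v \<times> 'v) \<Rightarrow> ('p \<Rightarrow> 'v list) \<Rightarrow> 'e \<Rightarrow> 'p \<Rightarrow> real" where
  "incidence ends pth e p = (if ends e \<in> set (zip (pth p) (tl (pth p))) then 1 else 0)"

definition edge_flow :: "('e::finite \<Rightarrow> 'v \<times> 'v) \<Rightarrow> ('p::finite \<Rightarrow> 'v list) \<Rightarrow> real^'p \<Rightarrow> real^'e" where
  "edge_flow ends pth x = (\<chi> e. \<Sum>p\<in>UNIV. incidence ends pth e p * x$p)"

definition lift :: "('w \<Rightarrow> 'p set) \<Rightarrow> 'w \<Rightarrow> real^'p::finite \<Rightarrow> real^'p" where
  "lift Pw w x = (\<chi> p. if p \<in> Pw w then x$p else 0)"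

definition feasible :: "'w set \<Rightarrow> ('w \<Rightarrow> 'p set) \<Rightarrow> ('w \<Rightarrow> real) \<Rightarrow> (real^'p::finite) set" where
  "feasible OD Pw d = {x. (\<forall>p. 0 \<le> x$p) \<and> (\<forall>w\<in>OD. (\<Sum>p\<in>Pw w. x$p) = d w)}"

definition block_feasible :: "('w \<Rightarrow> 'p set) \<Rightarrow> ('w \<Rightarrow> real) \<Rightarrow> 'w \<Rightarrow> (real^'p::finite) set" where
  "block_feasible Pw d w = {s. (\<forall>p. 0 \<le> s$p) \<and> (\<forall>p. p \<notin> Pw w \<longrightarrow> s$p = 0)
      \<and> (\<Sum>p\<in>Pw w. s$p) = d w}"

text \<open>The set whose supremum defines the block curvature constant C^(w).
  Here F is the edge-flow map x \<mapsto> Theta x and G the gradient of Psi.\<close>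
definition curv_set :: "(real^'e::finite \<Rightarrow> real) \<Rightarrow> (real^'e \<Rightarrow> real^'e) \<Rightarrow> (real^'p::finite \<Rightarrow> real^'e)
    \<Rightarrow> 'w set \<Rightarrow> ('w \<Rightarrow> 'p set) \<Rightarrow> ('w \<Rightarrow> real) \<Rightarrow> 'w \<Rightarrow> real set" where
  "curv_set Psi G F OD Pw d w =
     {2 / \<gamma>^2 * (Psi (F y) - Psi (F x) - G (F x) \<bullet> F (y - x)) | x s \<gamma> y.
        x \<in> feasible OD Pw d \<and> s \<in> block_feasible Pw d w \<and> 0 < \<gamma> \<and> \<gamma> \<le> 1
        \<and> y = x + \<gamma> *\<^sub>R (s - lift Pw w x)}"

definition block_curv where
  "block_curv Psi G F OD Pw d w = Sup (curv_set Psi G F OD Pw d w)"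

definition total_curv where
  "total_curv Psi G F OD Pw d = (\<Sum>w\<in>OD. block_curv Psi G F OD Pw d w)"

definition block_gap :: "(real^'e::finite \<Rightarrow> real^'e) \<Rightarrow> (real^'p::finite \<Rightarrow> real^'e)
    \<Rightarrow> ('w \<Rightarrow> 'p set) \<Rightarrow> ('w \<Rightarrow> real) \<Rightarrow> 'w \<Rightarrow> real^'p \<Rightarrow> real" where
  "block_gap G F Pw d w x = (SUP s\<in>block_feasible Pw d w. G (F x) \<bullet> F (lift Pw w x - s))"

definition fw_gap where
  "fw_gap G F OD Pw d x = (\<Sum>w\<in>OD. block_gap G F Pw d w x)"

definition batch_pmf :: "'w set \<Rightarrow> nat \<Rightarrow> 'w set pmf" where
  "batch_pmf OD m = pmf_of_set {I. I \<subseteq> OD \<and> card I = m}"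

text \<open>Distribution of x_{k+1} given x_k = x, for a selection s I w of block minimisers
  (which may depend on the drawn batch I).\<close>
definition sofw_next :: "'w set \<Rightarrow> ('w \<Rightarrow> 'p set) \<Rightarrow> nat \<Rightarrow> real
    \<Rightarrow> ('w set \<Rightarrow> 'w \<Rightarrow> real^'p::finite) \<Rightarrow> real^'p \<Rightarrow> (real^'p) pmf" where
  "sofw_next OD Pw m \<gamma> s x =
     map_pmf (\<lambda>I. x + \<gamma> *\<^sub>R ((1 / real m) *\<^sub>R (\<Sum>w\<in>I. s I w - lift Pw w x))) (batch_pmf OD m)"

end

theory Submission
  imports Defs
begin

(* Each block step x + \<gamma>(s^[w] - x^[w]) decreases \<Psi>(\<Theta>x) by at least \<gamma> g^(w)(x), up to the
   curvature term \<gamma>^2 C^(w)/2: this is just the definition of C^(w) together with the choice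
   of s^(w) as block minimiser.  The batched step is the mean of the m block steps of its batch,
   so by convexity its value is at most the mean of their values.  Averaging over the uniform
   batch, every OD pair lies in the same fraction m/|OD| of the batches, so m cancels. *)

lemma card_subsets_containing:
  assumes "finite A" "w \<in> A" "0 < m"
  shows "card {I. I \<subseteq> A \<and> card I = m \<and> w \<in> I} = (card A - 1) choose (m - 1)"
proof -
  have "{I. I \<subseteq> A \<and> card I = m \<and> w \<in> I} = insert w ` {J. J \<subseteq> A - {w} \<and> card J = m - 1}"
  proof (intro equalityI subsetI)
    fix I assume I: "I \<in> {I. I \<subseteq> A \<and> card I = m \<and> w \<in> I}"
    then have "I - {w} \<in> {J. J \<subseteq> A - {w} \<and> card J = m - 1}"
      using assms(1) by (auto simp: finite_subset)
    with I show "I \<in> insert w ` {J. J \<subseteq> A - {w} \<and> card J = m - 1}"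
      by (auto intro!: image_eqI[of _ _ "I - {w}"])
  next
    fix I assume "I \<in> insert w ` {J. J \<subseteq> A - {w} \<and> card J = m - 1}"
    then obtain J where J: "J \<subseteq> A - {w}" "card J = m - 1" "I = insert w J" by auto
    then have "finite J" "w \<notin> J" using assms(1) by (auto dest: finite_subset)
    with J assms show "I \<in> {I. I \<subseteq> A \<and> card I = m \<and> w \<in> I}" by auto
  qed
  moreover have "inj_on (insert w) {J. J \<subseteq> A - {w} \<and> card J = m - 1}"
    by (rule inj_onI) blast
  ultimately show ?thesis
    using assms by (simp add: card_image n_subsets card_Diff_singleton)
qed

lemma sum_over_subsets_of_card:
  fixes h :: "'a \<Rightarrow> 'b::comm_semiring_1"
  assumes "finite A" "0 < m"
  shows "(\<Sum>I | I \<subseteq> A \<and> card I = m. \<Sum>w\<in>I. h w)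
        = of_nat ((card A - 1) choose (m - 1)) * (\<Sum>w\<in>A. h w)"
proof -
  let ?S = "{I. I \<subseteq> A \<and> card I = m}"
  have "finite ?S" using assms(1) by simp
  have "(\<Sum>I\<in>?S. \<Sum>w\<in>I. h w) = (\<Sum>I\<in>?S. \<Sum>w | w \<in> A \<and> w \<in> I. h w)"
    by (intro sum.cong) (auto intro!: sum.cong)
  also have "\<dots> = (\<Sum>w\<in>A. \<Sum>I | I \<in> ?S \<and> w \<in> I. h w)"
    using \<open>finite ?S\<close> assms(1) by (rule sum.swap_restrict)
  also have "\<dots> = (\<Sum>w\<in>A. of_nat ((card A - 1) choose (m - 1)) * h w)"
    using card_subsets_containing[OF assms(1) _ assms(2)] by (intro sum.cong) (simp_all add: conj_assoc)
  finally show ?thesis by (simp add: sum_distrib_left)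
qed

lemma expectation_batch_pmf:
  assumes "finite A" "m \<le> card A"
  shows "measure_pmf.expectation (batch_pmf A m) f
           = (\<Sum>I | I \<subseteq> A \<and> card I = m. f I) / real (card A choose m)"
proof -
  obtain I where "I \<subseteq> A" "card I = m" using obtain_subset_with_card_n[OF assms(2)] by metis
  then have "{I. I \<subseteq> A \<and> card I = m} \<noteq> {}" by auto
  then show ?thesis
    using assms(1) by (simp add: batch_pmf_def integral_pmf_of_set n_subsets)
qed

lemma expectation_batch_pmf_mono:
  fixes f g :: "'a set \<Rightarrow> real"
  assumes "finite A" "m \<le> card A" "\<And>I. I \<subseteq> A \<Longrightarrow> card I = m \<Longrightarrow> f I \<le> g I"
  shows "measure_pmf.expectation (batch_pmf A m) f \<le> measure_pmf.expectation (batch_pmf A m) g"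
  unfolding expectation_batch_pmf[OF assms(1,2)]
  by (intro divide_right_mono sum_mono) (auto intro: assms(3))

lemma expectation_batch_pmf_mean:
  fixes h :: "'a \<Rightarrow> real"
  assumes "finite A" "0 < m" "m \<le> card A"
  shows "measure_pmf.expectation (batch_pmf A m) (\<lambda>I. (\<Sum>w\<in>I. h w) / real m)
           = (\<Sum>w\<in>A. h w) / real (card A)"
proof -
  let ?n = "card A"
  have "real m * real (?n choose m) = real ?n * real ((?n - 1) choose (m - 1))"
    using binomial_absorption[of "m - 1" ?n] assms(2) by (simp flip: of_nat_mult)
  moreover have "0 < ?n choose m" "0 < ?n" using assms by auto
  ultimately show ?thesis
    unfolding expectation_batch_pmf[OF assms(1,3)] sum_divide_distrib[symmetric]
      sum_over_subsets_of_card[OF assms(1,2)]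
    by (simp add: field_simps)
qed

lemma convex_on_compose_linear:
  assumes "linear F" "convex_on UNIV f"
  shows "convex_on UNIV (f \<circ> F)"
proof (rule convex_onI)
  fix t :: real and x y assume "0 < t" "t < 1"
  then show "(f \<circ> F) ((1 - t) *\<^sub>R x + t *\<^sub>R y) \<le> (1 - t) * (f \<circ> F) x + t * (f \<circ> F) y"
    using convex_onD[OF assms(2), of t "F x" "F y"]
    by (simp add: linear_add[OF assms(1)] linear_scale[OF assms(1)])
qed simp

lemma convex_on_mean_of_translates:
  fixes f :: "'a::real_vector \<Rightarrow> real"
  assumes "convex_on UNIV f" "finite I" "I \<noteq> {}"
  shows "f (x + (1 / real (card I)) *\<^sub>R (\<Sum>i\<in>I. v i)) \<le> (\<Sum>i\<in>I. f (x + v i)) / real (card I)"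
proof -
  have "card I > 0" using assms(2,3) by (simp add: card_gt_0_iff)
  then have "x + (1 / real (card I)) *\<^sub>R (\<Sum>i\<in>I. v i) = (\<Sum>i\<in>I. (1 / real (card I)) *\<^sub>R (x + v i))"
    by (simp add: scaleR_add_right sum.distrib scaleR_sum_right sum_constant_scaleR)
  then show ?thesis
    using convex_on_sum[OF assms(2,3,1), of "\<lambda>_. 1 / real (card I)" "\<lambda>i. x + v i"] \<open>card I > 0\<close>
    by (simp add: sum_divide_distrib)
qed

lemma linear_edge_flow: "linear (edge_flow ends pth)"
  unfolding edge_flow_def
  by (rule linearI) (simp_all add: vec_eq_iff algebra_simps sum.distrib sum_distrib_left)

lemma block_gap_eq_minimiser:
  assumes "linear F" "s \<in> block_feasible Pw d w"
    and "\<forall>s'\<in>block_feasible Pw d w. G (F x) \<bullet> F s \<le> G (F x) \<bullet> F s'"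
  shows "block_gap G F Pw d w x = G (F x) \<bullet> F (lift Pw w x - s)"
  unfolding block_gap_def
proof (rule cSup_eq_maximum)
  show "G (F x) \<bullet> F (lift Pw w x - s) \<in> (\<lambda>s. G (F x) \<bullet> F (lift Pw w x - s)) ` block_feasible Pw d w"
    using assms(2) by blast
next
  fix v assume "v \<in> (\<lambda>s. G (F x) \<bullet> F (lift Pw w x - s)) ` block_feasible Pw d w"
  then show "v \<le> G (F x) \<bullet> F (lift Pw w x - s)"
    using assms(3) by (auto simp: linear_diff[OF assms(1)] inner_diff_right)
qed

lemma block_step_curvature_bound:
  assumes "linear F" "bdd_above (curv_set Psi G F OD Pw d w)"
    and "x \<in> feasible OD Pw d" "s \<in> block_feasible Pw d w" "0 \<le> \<gamma>" "\<gamma> \<le> 1"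
  shows "Psi (F (x + \<gamma> *\<^sub>R (s - lift Pw w x)))
           \<le> Psi (F x) + \<gamma> * (G (F x) \<bullet> F (s - lift Pw w x)) + \<gamma>\<^sup>2 / 2 * block_curv Psi G F OD Pw d w"
proof (cases "\<gamma> = 0")
  case True
  then show ?thesis by simp
next
  case False
  define y where "y = x + \<gamma> *\<^sub>R (s - lift Pw w x)"
  have "2 / \<gamma>\<^sup>2 * (Psi (F y) - Psi (F x) - G (F x) \<bullet> F (y - x)) \<in> curv_set Psi G F OD Pw d w"
    unfolding curv_set_def using assms(3-6) False y_def by fastforce
  then have "2 / \<gamma>\<^sup>2 * (Psi (F y) - Psi (F x) - G (F x) \<bullet> F (y - x)) \<le> block_curv Psi G F OD Pw d w"
    unfolding block_curv_def using assms(2) by (rule cSup_upper)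
  moreover have "G (F x) \<bullet> F (y - x) = \<gamma> * (G (F x) \<bullet> F (s - lift Pw w x))"
    by (simp add: y_def linear_scale[OF assms(1)])
  ultimately show ?thesis
    using False assms(5) unfolding y_def[symmetric] by (simp add: field_simps)
qed

lemma block_step_descent:
  assumes "linear F" "bdd_above (curv_set Psi G F OD Pw d w)"
    and "x \<in> feasible OD Pw d" "s \<in> block_feasible Pw d w" "0 \<le> \<gamma>" "\<gamma> \<le> 1"
    and "\<forall>s'\<in>block_feasible Pw d w. G (F x) \<bullet> F s \<le> G (F x) \<bullet> F s'"
  shows "Psi (F (x + \<gamma> *\<^sub>R (s - lift Pw w x)))
           \<le> Psi (F x) - \<gamma> * block_gap G F Pw d w x + \<gamma>\<^sup>2 / 2 * block_curv Psi G F OD Pw d w"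
proof -
  have "block_gap G F Pw d w x = - (G (F x) \<bullet> F (s - lift Pw w x))"
    using block_gap_eq_minimiser[of F s Pw d w G x, OF assms(1,4,7)]
    by (simp add: linear_diff[OF assms(1)] inner_diff_right)
  then show ?thesis
    using block_step_curvature_bound[OF assms(1-6)] by simp
qed

lemma batch_step_descent:
  assumes "linear F" "convex_on UNIV Psi" "x \<in> feasible OD Pw d" "0 \<le> \<gamma>" "\<gamma> \<le> 1"
    and "finite I" "I \<noteq> {}"
    and "\<forall>w\<in>I. bdd_above (curv_set Psi G F OD Pw d w)"
    and "\<forall>w\<in>I. s w \<in> block_feasible Pw d w
           \<and> (\<forall>s'\<in>block_feasible Pw d w. G (F x) \<bullet> F (s w) \<le> G (F x) \<bullet> F s')"
  shows "Psi (F (x + \<gamma> *\<^sub>R ((1 / real (card I)) *\<^sub>R (\<Sum>w\<in>I. s w - lift Pw w x))))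
           \<le> (\<Sum>w\<in>I. Psi (F x) - \<gamma> * block_gap G F Pw d w x + \<gamma>\<^sup>2 / 2 * block_curv Psi G F OD Pw d w)
               / real (card I)"
proof -
  have "x + \<gamma> *\<^sub>R ((1 / real (card I)) *\<^sub>R (\<Sum>w\<in>I. s w - lift Pw w x))
          = x + (1 / real (card I)) *\<^sub>R (\<Sum>w\<in>I. \<gamma> *\<^sub>R (s w - lift Pw w x))"
    by (simp add: scaleR_sum_right)
  then have "Psi (F (x + \<gamma> *\<^sub>R ((1 / real (card I)) *\<^sub>R (\<Sum>w\<in>I. s w - lift Pw w x))))
          \<le> (\<Sum>w\<in>I. Psi (F (x + \<gamma> *\<^sub>R (s w - lift Pw w x)))) / real (card I)"
    using convex_on_mean_of_translates[OF convex_on_compose_linear[OF assms(1,2)] assms(6,7)] by simp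
  also have "\<dots> \<le> (\<Sum>w\<in>I. Psi (F x) - \<gamma> * block_gap G F Pw d w x + \<gamma>\<^sup>2 / 2 * block_curv Psi G F OD Pw d w)
               / real (card I)"
    using assms by (intro divide_right_mono sum_mono block_step_descent) auto
  finally show ?thesis .
qed

lemma average_block_bounds_eq:
  assumes "finite OD" "OD \<noteq> {}"
  shows "(\<Sum>w\<in>OD. c - \<gamma> * block_gap G F Pw d w x + \<gamma>\<^sup>2 / 2 * block_curv Psi G F OD Pw d w)
             / real (card OD)
           = c - \<gamma> / real (card OD) * fw_gap G F OD Pw d x
               + \<gamma>\<^sup>2 / (2 * real (card OD)) * total_curv Psi G F OD Pw d"
proof -
  have sum_eq: "(\<Sum>w\<in>OD. c - \<gamma> * block_gap G F Pw d w x + \<gamma>\<^sup>2 / 2 * block_curv Psi G F OD Pw d w)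
          = real (card OD) * c - \<gamma> * fw_gap G F OD Pw d x + \<gamma>\<^sup>2 / 2 * total_curv Psi G F OD Pw d"
    unfolding fw_gap_def total_curv_def by (simp add: sum.distrib sum_subtractf sum_distrib_left)
  show ?thesis unfolding sum_eq using assms by (simp add: field_simps card_gt_0_iff)
qed

theorem mainTheorem2:
  fixes V :: "'v set"
    and ends :: "'e::finite \<Rightarrow> 'v \<times> 'v"
    and OD :: "('v \<times> 'v) set"
    and d :: "'v \<times> 'v \<Rightarrow> real"
    and Pw :: "'v \<times> 'v \<Rightarrow> 'p::finite set"
    and pth :: "'p \<Rightarrow> 'v list"
    and Psi :: "real^'e \<Rightarrow> real"
    and G :: "real^'e \<Rightarrow> real^'e"
    and x :: "real^'p"
    and m :: nat
    and \<gamma> :: real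
    and s :: "('v \<times> 'v) set \<Rightarrow> 'v \<times> 'v \<Rightarrow> real^'p"
  assumes "finite V"
    and "inj ends"
    and "range ends \<subseteq> V \<times> V"
    and "finite OD" and "OD \<noteq> {}" and "OD \<subseteq> V \<times> V"
    and "\<forall>w\<in>OD. 0 < d w"
    and "\<forall>w\<in>OD. Pw w \<noteq> {}"
    and "\<forall>w\<in>OD. \<forall>w'\<in>OD. w \<noteq> w' \<longrightarrow> Pw w \<inter> Pw w' = {}"
    and "(\<Union>w\<in>OD. Pw w) = UNIV"
    and "\<forall>w\<in>OD. \<forall>p\<in>Pw w. is_dpath (range ends) (fst w) (snd w) (pth p)"
    and "convex_on UNIV Psi"
    and "\<forall>z. (Psi has_derivative (\<lambda>h. G z \<bullet> h)) (at z)"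
    and "continuous_on UNIV G"
    and "\<forall>w\<in>OD. bdd_above (curv_set Psi G (edge_flow ends pth) OD Pw d w)"
    and "x \<in> feasible OD Pw d"
    and "1 \<le> m" and "m \<le> card OD"
    and "0 \<le> \<gamma>" and "\<gamma> \<le> 1"
    and "\<forall>I. I \<subseteq> OD \<and> card I = m \<longrightarrow> (\<forall>w\<in>I. s I w \<in> block_feasible Pw d w \<and>
           (\<forall>s'\<in>block_feasible Pw d w.
              G (edge_flow ends pth x) \<bullet> edge_flow ends pth (s I w)
                \<le> G (edge_flow ends pth x) \<bullet> edge_flow ends pth s'))"
  shows "measure_pmf.expectation (sofw_next OD Pw m \<gamma> s x) (\<lambda>y. Psi (edge_flow ends pth y))
     \<le> Psi (edge_flow ends pth x)
        - \<gamma> / real (card OD) * fw_gap G (edge_flow ends pth) OD Pw d x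
        + \<gamma>^2 / (2 * real (card OD)) * total_curv Psi G (edge_flow ends pth) OD Pw d"
proof -
  define F where "F = edge_flow ends pth"
  define B where "B w = Psi (F x) - \<gamma> * block_gap G F Pw d w x
                         + \<gamma>\<^sup>2 / 2 * block_curv Psi G F OD Pw d w" for w
  have "linear F" unfolding F_def by (rule linear_edge_flow)
  have batch: "Psi (F (x + \<gamma> *\<^sub>R ((1 / real m) *\<^sub>R (\<Sum>w\<in>I. s I w - lift Pw w x))))
                 \<le> (\<Sum>w\<in>I. B w) / real m" if "I \<subseteq> OD" "card I = m" for I
  proof -
    have "finite I" "I \<noteq> {}" using that assms(4,17) by (auto dest: finite_subset)
    moreover have "\<forall>w\<in>I. bdd_above (curv_set Psi G F OD Pw d w)"
      using that assms(15) unfolding F_def by auto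
    moreover have "\<forall>w\<in>I. s I w \<in> block_feasible Pw d w
                     \<and> (\<forall>s'\<in>block_feasible Pw d w. G (F x) \<bullet> F (s I w) \<le> G (F x) \<bullet> F s')"
      using that assms(21) unfolding F_def by auto
    ultimately show ?thesis
      using batch_step_descent[OF \<open>linear F\<close> assms(12,16,19,20), of I G "s I"] that(2)
      unfolding B_def by simp
  qed
  have "measure_pmf.expectation (sofw_next OD Pw m \<gamma> s x) (\<lambda>y. Psi (F y))
      = measure_pmf.expectation (batch_pmf OD m)
          (\<lambda>I. Psi (F (x + \<gamma> *\<^sub>R ((1 / real m) *\<^sub>R (\<Sum>w\<in>I. s I w - lift Pw w x)))))"
    by (simp add: sofw_next_def)
  also have "\<dots> \<le> measure_pmf.expectation (batch_pmf OD m) (\<lambda>I. (\<Sum>w\<in>I. B w) / real m)"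
    using assms batch by (intro expectation_batch_pmf_mono) auto
  also have "\<dots> = (\<Sum>w\<in>OD. B w) / real (card OD)"
    using assms by (intro expectation_batch_pmf_mean) auto
  also have "\<dots> = Psi (F x) - \<gamma> / real (card OD) * fw_gap G F OD Pw d x
                   + \<gamma>\<^sup>2 / (2 * real (card OD)) * total_curv Psi G F OD Pw d"
    unfolding B_def using assms(4,5) by (rule average_block_bounds_eq)
  finally show ?thesis unfolding F_def .
qed

end
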